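(* Let $(I^*,\pi^* )\in\mathcal I_L\times\mathbb R$ be a Pareto optimal contract with $\rho^{Pol}(I^*,\pi^* )=\rho^{Pol}(0,0)$. Then there exists a pricing distortion function $g^*_{I^*}$ such that $(I^*,g^*_{I^*})$ is a Stackelberg equilibrium and $\Pi_{g^*_{I^*}}(I^*(X))=\pi^*$.
   Context: $(\Omega,\mathcal F,\mathbb P)$ is a non-atomic probability space; $X\ge0$ is bounded with range $[0,M]$ and strictly increasing distribution function $F_X$. A distortion function is a non-decreasing differentiable map $h:[0,1]\to[0,1]$ with $h(0)=0$, $h(1)=1$; $\int Y\,\mathrm dh\circ\mathbb P=\int_0^\infty h(\mathbb P(Y\ge y))\mathrm dy+\int_{-\infty}^0[h(\mathbb P(Y\ge y))-1]\mathrm dy$. Policyholder distortion $T$, $\rho^{Pol}(Z)=\int Z\,\mathrm dT\circ\mathbb P$; pricing distortion $g$, $\Pi_g(I(X))=\int I(X)\,\mathrm dg\circ\mathbb P$. $\mathcal I_L=\{I:[0,M]\to[0,M]: I(0)=0,\ 0\le I(x_1)-I(x_2)\le x_1-x_2\ \forall x_2\le x_1\}$; for a mechanism, $\rho^{Pol}(I,g)=\rho^{Pol}(X-I(X)+\Pi_g(I(X)))$ and $V^{In}(I,g)=\Pi_g(I(X))-\mathbb E[I(X)]$. $(I^*,g^* )$ is a Stackelberg equilibrium if (i) $I^*\in\arg\min_{I\in\mathcal I_L}\rho^{Pol}(I,g^* )$ and (ii) $V^{In}(I^*,g^* )\ge V^{In}(I,g)$ for all $(I,g)$ with $I\in\arg\min_{\bar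 I\in\mathcal I_L}\rho^{Pol}(\bar I,g)$. For a contract $(I,\pi)\in\mathcal I_L\times\mathbb R$: $\rho^{Pol}(I,\pi)=\rho^{Pol}(X-I(X)+\pi)$, $V^{In}(I,\pi)=\pi-\mathbb E[I(X)]$; it is Pareto optimal if no $(I',\pi')$ has $\rho^{Pol}(I',\pi')\le\rho^{Pol}(I,\pi)$ and $V^{In}(I',\pi')\ge V^{In}(I,\pi)$ with at least one strict inequality. *)

theory Defs
  imports "HOL-Probability.Probability"
begin

definition distortion :: "(real \<Rightarrow> real) \<Rightarrow> bool" where
  "distortion h \<longleftrightarrow> mono_on {0..1} h \<and> h ` {0..1} \<subseteq> {0..1}
     \<and> h differentiable_on {0..1} \<and> h 0 = 0 \<and> h 1 = 1"

definition choquet :: "'a measure \<Rightarrow> (real \<Rightarrow> real) \<Rightarrow> ('a \<Rightarrow> real) \<Rightarrow> real" where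
  "choquet M h Y =
     (LINT y:{0..}|lborel. h (measure M {\<omega> \<in> space M. y \<le> Y \<omega>}))
   + (LINT y:{..<0}|lborel. h (measure M {\<omega> \<in> space M. y \<le> Y \<omega>}) - 1)"

definition IL :: "real \<Rightarrow> (real \<Rightarrow> real) set" where
  "IL Mx = {I. (\<forall>x\<in>{0..Mx}. I x \<in> {0..Mx}) \<and> I 0 = 0 \<and>
     (\<forall>x1\<in>{0..Mx}. \<forall>x2\<in>{0..Mx}. x2 \<le> x1 \<longrightarrow> 0 \<le> I x1 - I x2 \<and> I x1 - I x2 \<le> x1 - x2)}"

definition premium :: "'a measure \<Rightarrow> ('a \<Rightarrow> real) \<Rightarrow> (real \<Rightarrow> real) \<Rightarrow> (real \<Rightarrow> real) \<Rightarrow> real" where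
  "premium M X g I = choquet M g (\<lambda>\<omega>. I (X \<omega>))"

definition rho_mech :: "'a measure \<Rightarrow> ('a \<Rightarrow> real) \<Rightarrow> (real \<Rightarrow> real) \<Rightarrow> (real \<Rightarrow> real) \<Rightarrow> (real \<Rightarrow> real) \<Rightarrow> real" where
  "rho_mech M X T I g = choquet M T (\<lambda>\<omega>. X \<omega> - I (X \<omega>) + premium M X g I)"

definition V_mech :: "'a measure \<Rightarrow> ('a \<Rightarrow> real) \<Rightarrow> (real \<Rightarrow> real) \<Rightarrow> (real \<Rightarrow> real) \<Rightarrow> real" where
  "V_mech M X I g = premium M X g I - (\<integral>\<omega>. I (X \<omega>) \<partial>M)"

definition rho_contract :: "'a measure \<Rightarrow> ('a \<Rightarrow> real) \<Rightarrow> (real \<Rightarrow> real) \<Rightarrow> (real \<Rightarrow> real) \<Rightarrow> real \<Rightarrow> real" where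
  "rho_contract M X T I \<pi> = choquet M T (\<lambda>\<omega>. X \<omega> - I (X \<omega>) + \<pi>)"

definition V_contract :: "'a measure \<Rightarrow> ('a \<Rightarrow> real) \<Rightarrow> (real \<Rightarrow> real) \<Rightarrow> real \<Rightarrow> real" where
  "V_contract M X I \<pi> = \<pi> - (\<integral>\<omega>. I (X \<omega>) \<partial>M)"

definition pareto_optimal :: "'a measure \<Rightarrow> ('a \<Rightarrow> real) \<Rightarrow> real \<Rightarrow> (real \<Rightarrow> real) \<Rightarrow> (real \<Rightarrow> real) \<Rightarrow> real \<Rightarrow> bool" where
  "pareto_optimal M X Mx T I \<pi> \<longleftrightarrow> I \<in> IL Mx \<and>
     \<not> (\<exists>I'\<in>IL Mx. \<exists>\<pi>'::real.
          rho_contract M X T I' \<pi>' \<le> rho_contract M X T I \<pi> \<and>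
          V_contract M X I' \<pi>' \<ge> V_contract M X I \<pi> \<and>
          (rho_contract M X T I' \<pi>' < rho_contract M X T I \<pi> \<or>
           V_contract M X I' \<pi>' > V_contract M X I \<pi>))"

definition best_response :: "'a measure \<Rightarrow> ('a \<Rightarrow> real) \<Rightarrow> real \<Rightarrow> (real \<Rightarrow> real) \<Rightarrow> (real \<Rightarrow> real) \<Rightarrow> (real \<Rightarrow> real) \<Rightarrow> bool" where
  "best_response M X Mx T g I \<longleftrightarrow> I \<in> IL Mx \<and>
     (\<forall>J\<in>IL Mx. rho_mech M X T I g \<le> rho_mech M X T J g)"

definition stackelberg :: "'a measure \<Rightarrow> ('a \<Rightarrow> real) \<Rightarrow> real \<Rightarrow> (real \<Rightarrow> real) \<Rightarrow> (real \<Rightarrow> real) \<Rightarrow> (real \<Rightarrow> real) \<Rightarrow> bool" where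
  "stackelberg M X Mx T I g \<longleftrightarrow> distortion g \<and> best_response M X Mx T g I \<and>
     (\<forall>I' g'. distortion g' \<longrightarrow> best_response M X Mx T g' I' \<longrightarrow>
        V_mech M X I g \<ge> V_mech M X I' g')"

definition nonatomic :: "'a measure \<Rightarrow> bool" where
  "nonatomic M \<longleftrightarrow> (\<forall>A\<in>sets M. measure M A > 0 \<longrightarrow>
     (\<exists>B\<in>sets M. B \<subseteq> A \<and> 0 < measure M B \<and> measure M B < measure M A))"

end

theory Submission
  imports Defs
begin

text \<open>Under the pricing distortion \<open>g = T\<close> the policyholder is indifferent between all
  admissible indemnities: \<open>X - I(X)\<close> and \<open>I(X)\<close> are comonotone, so the Choquet integral
  with respect to \<open>T \<circ> P\<close> splits additively and \<open>X - I(X) + \<Pi>\<^sub>T(I(X))\<close> always has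
  risk \<open>\<rho>(X)\<close>. Hence \<open>I\<^sup>*\<close> is a best response to \<open>T\<close>, and the indifference of
  \<open>(I\<^sup>*,\<pi>\<^sup>*)\<close> to \<open>(0,0)\<close> forces \<open>\<Pi>\<^sub>T(I\<^sup>*(X)) = \<pi>\<^sup>*\<close>. A best response \<open>I\<close> to any
  other pricing distortion \<open>g\<close> is at least as good as no insurance, hence as \<open>(I\<^sup>*,\<pi>\<^sup>*)\<close>,
  and Pareto optimality then bounds the insurer's value of \<open>(I,g)\<close> by that of \<open>(I\<^sup>*,T)\<close>.

  Comonotone additivity comes from writing the Choquet integral of a nondecreasing function
  of \<open>X\<close> as an ordinary expectation under the distorted law whose survival function is
  \<open>h\<close> applied to the survival function of \<open>X\<close>; linearity of that expectation does the rest.\<close>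

lemma distortion_tendsto_compose:
  assumes "distortion h" and "(f \<longlongrightarrow> l) F" and "l \<in> {0..1}"
    and "eventually (\<lambda>x. f x \<in> {0..1}) F"
  shows "((\<lambda>x. h (f x)) \<longlongrightarrow> h l) F"
proof (rule continuous_on_tendsto_compose[OF _ assms(2-4)])
  show "continuous_on {0..1} h"
    using assms(1) by (auto simp: distortion_def intro: differentiable_imp_continuous_on)
qed

lemma upclosed_real_cases:
  fixes U :: "real set"
  assumes up: "\<And>x y. x \<in> U \<Longrightarrow> x \<le> y \<Longrightarrow> y \<in> U"
  obtains "U = {}" | "U = UNIV" | a where "U = {a..}" | a where "U = {a<..}"
proof (cases "U = {} \<or> U = UNIV")
  case False
  then obtain b u where b: "b \<notin> U" and u: "u \<in> U" by auto
  have bdd: "bdd_below U"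
    using up b by (metis bdd_belowI nle_le)
  have "U = {Inf U..} \<or> U = {Inf U<..}"
  proof (cases "Inf U \<in> U")
    case True
    then show ?thesis using up cInf_lower[OF _ bdd] by auto
  next
    case False
    have "x \<in> U" if "Inf U < x" for x
      using cInf_less_iff[OF _ bdd] that u up by (metis empty_iff less_le)
    then show ?thesis using False cInf_lower[OF _ bdd] by (auto simp: less_le)
  qed
  then show ?thesis using that by blast
qed (use that in blast)

lemma choquet_cong:
  assumes "\<And>\<omega>. \<omega> \<in> space M \<Longrightarrow> Y \<omega> = Z \<omega>"
  shows "choquet M h Y = choquet M h Z"
proof -
  have "{\<omega> \<in> space M. y \<le> Y \<omega>} = {\<omega> \<in> space M. y \<le> Z \<omega>}" for y
    using assms by auto
  then show ?thesis
    by (simp add: choquet_def)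
qed

lemma (in prob_space) integrable_subgraph_kernel:
  fixes f :: "'a \<Rightarrow> real"
  assumes [measurable]: "f \<in> borel_measurable M" and K: "\<And>x. x \<in> space M \<Longrightarrow> \<bar>f x\<bar> \<le> K"
  shows "integrable (M \<Otimes>\<^sub>M lborel)
    (\<lambda>(x, y). indicator {0..f x} y - indicator {f x<..<0} y :: real)"
proof (rule Bochner_Integration.integrable_bound)
  have "emeasure lborel {-K..K} < \<infinity>"
    by (intro emeasure_bounded_finite) simp
  then show "integrable (M \<Otimes>\<^sub>M lborel) (indicator (space M \<times> {-K..K}) :: _ \<Rightarrow> real)"
    by (intro integrable_real_indicator)
      (auto simp: lborel.emeasure_pair_measure_Times ennreal_mult_less_top emeasure_space_1)
  show "(\<lambda>(x, y). indicator {0..f x} y - indicator {f x<..<0} y :: real)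
      \<in> borel_measurable (M \<Otimes>\<^sub>M lborel)"
    unfolding indicator_def atLeastAtMost_iff greaterThanLessThan_iff by measurable
  show "AE p in M \<Otimes>\<^sub>M lborel. norm ((\<lambda>(x, y). indicator {0..f x} y - indicator {f x<..<0} y :: real) p)
      \<le> norm (indicator (space M \<times> {-K..K}) p :: real)"
    using K by (intro AE_I2) (force simp: indicator_def space_pair_measure)
qed

lemma (in prob_space) integral_eq_choquet_id:
  assumes f[measurable]: "f \<in> borel_measurable M" and K: "\<And>x. x \<in> space M \<Longrightarrow> \<bar>f x\<bar> \<le> K"
  shows "integral\<^sup>L M f = choquet M (\<lambda>p. p) f"
proof -
  interpret P: pair_sigma_finite M lborel ..
  \<comment> \<open>Fubini for the signed indicator of the region between the graph of \<open>f\<close> and the axis: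
    integrating out \<open>y\<close> gives \<open>f x\<close>, integrating out \<open>x\<close> gives the integrand of \<open>choquet\<close>.\<close>
  define H :: "'a \<Rightarrow> real \<Rightarrow> real"
    where "H x y = indicator {0..f x} y - indicator {f x<..<0} y" for x y
  have H_integrable: "integrable (M \<Otimes>\<^sub>M lborel) (case_prod H)"
    unfolding H_def using integrable_subgraph_kernel[OF f K] by simp
  have inner: "(\<integral>y. H x y \<partial>lborel) = f x" for x
    by (cases "0 \<le> f x") (simp_all add: H_def)
  define Q where "Q y = (\<integral>x. H x y \<partial>M)" for y
  have Q_nonneg: "Q y = measure M {x \<in> space M. y \<le> f x}" if "0 \<le> y" for y
  proof -
    have "Q y = (\<integral>x. indicator {x \<in> space M. y \<le> f x} x \<partial>M)"
      unfolding Q_def using that by (intro Bochner_Integration.integral_cong) (auto simp: H_def indicator_def)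
    then show ?thesis
      by simp
  qed
  have Q_neg: "Q y = measure M {x \<in> space M. y \<le> f x} - 1" if "y < 0" for y
  proof -
    have "Q y = (\<integral>x. indicator {x \<in> space M. y \<le> f x} x - 1 \<partial>M)"
      unfolding Q_def using that by (intro Bochner_Integration.integral_cong) (auto simp: H_def indicator_def)
    moreover have "integrable M (indicator {x \<in> space M. y \<le> f x} :: 'a \<Rightarrow> real)"
      by (intro integrable_real_indicator) (simp_all add: emeasure_eq_measure)
    ultimately show ?thesis
      by (simp add: prob_space)
  qed
  have Q_integrable: "integrable lborel Q"
    unfolding Q_def using P.integrable_snd[OF H_integrable] .
  have "integral\<^sup>L M f = (\<integral>x. (\<integral>y. H x y \<partial>lborel) \<partial>M)"
    by (simp add: inner)
  also have "\<dots> = (\<integral>y. Q y \<partial>lborel)"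
    unfolding Q_def using P.Fubini_integral[OF H_integrable] by simp
  also have "\<dots> = (LINT y:{0..} \<union> {..<0}|lborel. Q y)"
    by (simp add: set_lebesgue_integral_def not_le flip: Compl_eq Compl_atLeast)
  also have "\<dots> = (LINT y:{0..}|lborel. Q y) + (LINT y:{..<0}|lborel. Q y)"
    using Q_integrable unfolding set_integrable_def
    by (intro set_integral_Un) (auto simp: set_integrable_def integrable_real_mult_indicator mult.commute)
  also have "\<dots> = choquet M (\<lambda>p. p) f"
    unfolding choquet_def by (intro arg_cong2[where f="(+)"] set_lebesgue_integral_cong) (auto simp: Q_nonneg Q_neg)
  finally show ?thesis .
qed

lemma (in prob_space) choquet_distr:
  assumes [measurable]: "X \<in> borel_measurable M" "\<phi> \<in> borel_measurable borel"
  shows "choquet M h (\<lambda>\<omega>. \<phi> (X \<omega>)) = choquet (distr M borel X) h \<phi>"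
proof -
  have "measure (distr M borel X) {x \<in> space (distr M borel X). y \<le> \<phi> x} = measure M {\<omega> \<in> space M. y \<le> \<phi> (X \<omega>)}" for y
    by (subst measure_distr) (auto intro!: arg_cong[where f="measure M"])
  then show ?thesis
    unfolding choquet_def by simp
qed

definition distorted_distribution :: "real measure \<Rightarrow> (real \<Rightarrow> real) \<Rightarrow> real measure" where
  "distorted_distribution \<mu> h = interval_measure (\<lambda>x. 1 - h (1 - cdf \<mu> x))"

context real_distribution
begin

lemma mono_imp_borel_measurable:
  fixes f :: "real \<Rightarrow> real"
  assumes "mono f"
  shows "f \<in> borel_measurable M"
  using borel_measurable_mono[OF assms] measurable_cong_sets[OF events_eq_borel refl] by simp

lemma integrable_mono_bounded:
  fixes f :: "real \<Rightarrow> real"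
  assumes "mono f" and "\<And>x. \<bar>f x\<bar> \<le> K"
  shows "integrable M f"
  using assms by (intro integrable_const_bound[of _ K] mono_imp_borel_measurable) auto

lemma distorted_cdf_distribution_function:
  assumes h: "distortion h"
  defines "G \<equiv> \<lambda>x. 1 - h (1 - cdf M x)"
  shows "x \<le> y \<Longrightarrow> G x \<le> G y" and "continuous (at_right a) G"
    and "(G \<longlongrightarrow> 0) at_bot" and "(G \<longlongrightarrow> 1) at_top"
proof -
  have cdf01: "1 - cdf M x \<in> {0..1}" for x
    by (simp add: cdf_nonneg cdf_bounded_prob)
  show "x \<le> y \<Longrightarrow> G x \<le> G y"
    using h cdf01 cdf_nondecreasing[of x y] unfolding G_def distortion_def mono_on_def
    by (smt (verit))
  show "continuous (at_right a) G"
    using cdf_is_right_cont[of a] cdf01 unfolding G_def continuous_within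
    by (intro tendsto_intros distortion_tendsto_compose[OF h]) auto
  have "((\<lambda>x. h (1 - cdf M x)) \<longlongrightarrow> h (1 - 0)) at_bot"
    using cdf_lim_at_bot cdf01 by (intro tendsto_intros distortion_tendsto_compose[OF h]) auto
  then show "(G \<longlongrightarrow> 0) at_bot"
    using h unfolding G_def distortion_def by (auto intro: tendsto_eq_intros)
  have "((\<lambda>x. h (1 - cdf M x)) \<longlongrightarrow> h (1 - 1)) at_top"
    using cdf_lim_at_top_prob cdf01 by (intro tendsto_intros distortion_tendsto_compose[OF h]) auto
  then show "(G \<longlongrightarrow> 1) at_top"
    using h unfolding G_def distortion_def by (auto intro: tendsto_eq_intros)
qed

lemma real_distribution_distorted_distribution:
  assumes "distortion h"
  shows "real_distribution (distorted_distribution M h)"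
  unfolding distorted_distribution_def
  using distorted_cdf_distribution_function[OF assms] by (rule real_distribution_interval_measure)

lemma cdf_distorted_distribution:
  assumes "distortion h"
  shows "cdf (distorted_distribution M h) = (\<lambda>x. 1 - h (1 - cdf M x))"
  unfolding distorted_distribution_def
  using distorted_cdf_distribution_function(1-3)[OF assms] by (rule cdf_interval_measure)

lemma measure_distorted_distribution_greaterThan:
  assumes h: "distortion h"
  shows "measure (distorted_distribution M h) {a<..} = h (measure M {a<..})"
proof -
  interpret D: real_distribution "distorted_distribution M h"
    using real_distribution_distorted_distribution[OF h] .
  have "measure (distorted_distribution M h) {a<..} = 1 - cdf (distorted_distribution M h) a"
    using D.prob_compl[of "{..a}"] by (simp add: cdf_def Compl_eq_Diff_UNIV[symmetric])
  moreover have "measure M {a<..} = 1 - cdf M a"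
    using prob_compl[of "{..a}"] by (simp add: cdf_def Compl_eq_Diff_UNIV[symmetric])
  ultimately show ?thesis
    using cdf_distorted_distribution[OF h] by simp
qed

lemma measure_distorted_distribution_atLeast:
  assumes h: "distortion h"
  shows "measure (distorted_distribution M h) {a..} = h (measure M {a..})"
proof -
  interpret D: real_distribution "distorted_distribution M h"
    using real_distribution_distorted_distribution[OF h] .
  have "(cdf (distorted_distribution M h) \<longlongrightarrow> 1 - h (1 - measure M {..<a})) (at_left a)"
    unfolding cdf_distorted_distribution[OF h] using cdf_at_left[of a] cdf_nonneg cdf_bounded_prob
    by (intro tendsto_intros distortion_tendsto_compose[OF h]) auto
  then have "measure (distorted_distribution M h) {..<a} = 1 - h (1 - measure M {..<a})"
    using tendsto_unique[OF _ D.cdf_at_left] by simp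
  moreover have "measure M {a..} = 1 - measure M {..<a}"
    using prob_compl[of "{..<a}"] by (simp add: Compl_eq_Diff_UNIV[symmetric])
  moreover have "measure (distorted_distribution M h) {a..} = 1 - measure (distorted_distribution M h) {..<a}"
    using D.prob_compl[of "{..<a}"] by (simp add: Compl_eq_Diff_UNIV[symmetric])
  ultimately show ?thesis by simp
qed

lemma measure_distorted_distribution_upclosed:
  assumes h: "distortion h" and up: "\<And>x y. x \<in> U \<Longrightarrow> x \<le> y \<Longrightarrow> y \<in> U"
  shows "measure (distorted_distribution M h) U = h (measure M U)"
proof -
  interpret D: real_distribution "distorted_distribution M h"
    using real_distribution_distorted_distribution[OF h] .
  have "h 0 = 0" "h 1 = 1" using h by (auto simp: distortion_def)
  with up show ?thesis
    by (cases rule: upclosed_real_cases)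
      (auto simp: D.prob_space[unfolded D.space_eq_univ] prob_space[unfolded space_eq_univ]
        measure_distorted_distribution_atLeast[OF h] measure_distorted_distribution_greaterThan[OF h])
qed

lemma choquet_eq_integral_distorted_distribution:
  assumes h: "distortion h" and "mono \<phi>" and K: "\<And>x. \<bar>\<phi> x\<bar> \<le> K"
  shows "choquet M h \<phi> = integral\<^sup>L (distorted_distribution M h) \<phi>"
proof -
  interpret D: real_distribution "distorted_distribution M h"
    using real_distribution_distorted_distribution[OF h] .
  have "\<phi> \<in> borel_measurable (distorted_distribution M h)"
    using \<open>mono \<phi>\<close> by (rule D.mono_imp_borel_measurable)
  then have "integral\<^sup>L (distorted_distribution M h) \<phi> = choquet (distorted_distribution M h) (\<lambda>p. p) \<phi>"
    using K by (rule D.integral_eq_choquet_id)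
  also have "\<dots> = choquet M h \<phi>"
  proof -
    have "measure (distorted_distribution M h) {x. y \<le> \<phi> x} = h (measure M {x. y \<le> \<phi> x})" for y
      using \<open>mono \<phi>\<close> by (intro measure_distorted_distribution_upclosed[OF h]) (auto intro: order_trans monoD)
    then show ?thesis
      unfolding choquet_def by simp
  qed
  finally show ?thesis ..
qed

end

lemma mono_truncation:
  fixes f :: "real \<Rightarrow> real"
  assumes "a \<le> b" and "mono_on {a..b} f"
  shows "mono (\<lambda>x. f (max a (min b x)))"
  using assms by (intro monoI) (auto simp: mono_on_def)

lemma abs_truncation_le:
  fixes f :: "real \<Rightarrow> real"
  assumes "a \<le> b" and "mono_on {a..b} f"
  shows "\<bar>f (max a (min b x))\<bar> \<le> \<bar>f a\<bar> + \<bar>f b\<bar>"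
proof -
  have "f a \<le> f (max a (min b x))" "f (max a (min b x)) \<le> f b"
    using assms by (auto simp: mono_on_def)
  then show ?thesis by linarith
qed

lemma IL_mono_on:
  assumes "J \<in> IL Mx"
  shows "mono_on {0..Mx} J" and "mono_on {0..Mx} (\<lambda>x. x - J x + c)"
proof -
  have "0 \<le> J s - J r \<and> J s - J r \<le> s - r" if "r \<in> {0..Mx}" "s \<in> {0..Mx}" "r \<le> s" for r s
    using assms that unfolding IL_def by blast
  then show "mono_on {0..Mx} J" and "mono_on {0..Mx} (\<lambda>x. x - J x + c)"
    unfolding mono_on_def by force+
qed

lemma zero_in_IL: "0 \<le> Mx \<Longrightarrow> (\<lambda>_. 0) \<in> IL Mx"
  by (simp add: IL_def)

locale bounded_loss = prob_space M for M :: "'a measure" +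
  fixes X :: "'a \<Rightarrow> real" and Mx :: real
  assumes X_measurable[measurable]: "X \<in> borel_measurable M"
    and X_bounds: "\<forall>\<omega>\<in>space M. 0 \<le> X \<omega> \<and> X \<omega> \<le> Mx"
begin

lemma Mx_nonneg: "0 \<le> Mx"
  using X_bounds not_empty by force

lemma choquet_eq_integral_truncation:
  assumes h: "distortion h" and J: "mono_on {0..Mx} J"
  shows "choquet M h (\<lambda>\<omega>. J (X \<omega>))
    = integral\<^sup>L (distorted_distribution (distr M borel X) h) (\<lambda>x. J (max 0 (min Mx x)))"
proof -
  interpret \<mu>: real_distribution "distr M borel X"
    by simp
  \<comment> \<open>\<open>J\<close> is only constrained on \<open>[0, Mx]\<close>; truncating its argument extends it to a
    nondecreasing function on all of \<open>\<real>\<close> without changing \<open>J \<circ> X\<close>.\<close>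
  have mono: "mono (\<lambda>x. J (max 0 (min Mx x)))"
    using mono_truncation[OF Mx_nonneg J] .
  have "choquet M h (\<lambda>\<omega>. J (X \<omega>)) = choquet M h (\<lambda>\<omega>. J (max 0 (min Mx (X \<omega>))))"
    using X_bounds by (intro choquet_cong) simp
  also have "\<dots> = choquet (distr M borel X) h (\<lambda>x. J (max 0 (min Mx x)))"
    using borel_measurable_mono[OF mono] by (intro choquet_distr) simp_all
  also have "\<dots> = integral\<^sup>L (distorted_distribution (distr M borel X) h) (\<lambda>x. J (max 0 (min Mx x)))"
    using h mono abs_truncation_le[OF Mx_nonneg J]
    by (rule \<mu>.choquet_eq_integral_distorted_distribution)
  finally show ?thesis .
qed

lemma choquet_retained_loss:
  assumes h: "distortion h" and J: "J \<in> IL Mx"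
  shows "choquet M h (\<lambda>\<omega>. X \<omega> - J (X \<omega>) + c) = choquet M h X - premium M X h J + c"
proof -
  interpret \<mu>: real_distribution "distr M borel X"
    by simp
  let ?D = "distorted_distribution (distr M borel X) h"
  interpret D: real_distribution ?D
    using \<mu>.real_distribution_distorted_distribution[OF h] .
  let ?t = "\<lambda>x. max 0 (min Mx x)"
  have id_mono: "mono_on {0..Mx} (\<lambda>x. x)"
    by (simp add: mono_on_def)
  have truncation_integrable: "integrable ?D (\<lambda>x. f (?t x))"
    if "mono_on {0..Mx} f" for f :: "real \<Rightarrow> real"
    using mono_truncation[OF Mx_nonneg that] abs_truncation_le[OF Mx_nonneg that]
    by (rule D.integrable_mono_bounded)
  have "choquet M h (\<lambda>\<omega>. X \<omega> - J (X \<omega>) + c) = integral\<^sup>L ?D (\<lambda>x. ?t x - J (?t x) + c)"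
    using choquet_eq_integral_truncation[OF h IL_mono_on(2)[OF J]] .
  also have "\<dots> = integral\<^sup>L ?D ?t - integral\<^sup>L ?D (\<lambda>x. J (?t x)) + c"
    using truncation_integrable[OF id_mono] truncation_integrable[OF IL_mono_on(1)[OF J]]
    by (simp add: D.prob_space[unfolded D.space_eq_univ])
  also have "\<dots> = choquet M h X - premium M X h J + c"
    using choquet_eq_integral_truncation[OF h id_mono]
      choquet_eq_integral_truncation[OF h IL_mono_on(1)[OF J]]
    by (simp add: premium_def)
  finally show ?thesis .
qed

lemma premium_no_insurance:
  assumes "distortion g"
  shows "premium M X g (\<lambda>_. 0) = 0"
  using choquet_eq_integral_truncation[OF assms, of "\<lambda>_. 0"] by (simp add: premium_def mono_on_def)

lemma rho_mech_self_priced: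
  assumes "distortion T" and "J \<in> IL Mx"
  shows "rho_mech M X T J T = choquet M T X"
  using choquet_retained_loss[OF assms] by (simp add: rho_mech_def)

lemma best_response_self_priced:
  assumes "distortion T" and "J \<in> IL Mx"
  shows "best_response M X Mx T T J"
  using assms rho_mech_self_priced[OF assms(1)] by (simp add: best_response_def)

lemma premium_eq_if_indifferent_to_no_insurance:
  assumes T: "distortion T" and I: "I \<in> IL Mx"
    and indifferent: "rho_contract M X T I \<pi> = rho_contract M X T (\<lambda>_. 0) 0"
  shows "premium M X T I = \<pi>"
  using indifferent choquet_retained_loss[OF T I, of \<pi>]
    choquet_retained_loss[OF T zero_in_IL[OF Mx_nonneg], of 0]
  by (simp add: rho_contract_def premium_no_insurance[OF T])

lemma V_mech_le_if_pareto_optimal: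
  assumes pareto: "pareto_optimal M X Mx T I \<pi>"
    and indifferent: "rho_contract M X T I \<pi> = rho_contract M X T (\<lambda>_. 0) 0"
    and g: "distortion g" and response: "best_response M X Mx T g I'"
  shows "V_mech M X I' g \<le> V_contract M X I \<pi>"
proof -
  have I': "I' \<in> IL Mx"
    using response by (simp add: best_response_def)
  have "rho_contract M X T I' (premium M X g I') = rho_mech M X T I' g"
    by (simp add: rho_mech_def rho_contract_def)
  also have "\<dots> \<le> rho_mech M X T (\<lambda>_. 0) g"
    using response zero_in_IL[OF Mx_nonneg] by (simp add: best_response_def)
  also have "\<dots> = rho_contract M X T I \<pi>"
    using indifferent by (simp add: rho_mech_def rho_contract_def premium_no_insurance[OF g])
  finally have "\<not> V_contract M X I \<pi> < V_contract M X I' (premium M X g I')"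
    using pareto I' unfolding pareto_optimal_def by force
  then show ?thesis
    by (simp add: V_contract_def V_mech_def)
qed

end

theorem proposition3:
  fixes M :: "'a measure" and X :: "'a \<Rightarrow> real" and Mx :: real
    and T :: "real \<Rightarrow> real" and Istar :: "real \<Rightarrow> real" and \<pi>star :: real
  assumes "prob_space M"
    and "nonatomic M"
    and "X \<in> borel_measurable M"
    and "\<forall>\<omega>\<in>space M. 0 \<le> X \<omega> \<and> X \<omega> \<le> Mx"
    and "strict_mono_on {0..Mx} (\<lambda>x. measure M {\<omega> \<in> space M. X \<omega> \<le> x})"
    and "distortion T"
    and "Istar \<in> IL Mx"
    and "pareto_optimal M X Mx T Istar \<pi>star"
    and "rho_contract M X T Istar \<pi>star = rho_contract M X T (\<lambda>_. 0) 0"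
  shows "\<exists>g. distortion g \<and> stackelberg M X Mx T Istar g \<and> premium M X g Istar = \<pi>star"
proof -
  interpret bounded_loss M X Mx
    using assms(1,3,4) by (simp add: bounded_loss_def bounded_loss_axioms_def)
  have premium: "premium M X T Istar = \<pi>star"
    using assms(6,7,9) by (rule premium_eq_if_indifferent_to_no_insurance)
  have "V_mech M X I' g \<le> V_mech M X Istar T"
    if "distortion g" and "best_response M X Mx T g I'" for I' g
    using V_mech_le_if_pareto_optimal[OF assms(8,9) that] premium
    by (simp add: V_mech_def V_contract_def)
  then have "stackelberg M X Mx T Istar T"
    using assms(6,7) best_response_self_priced by (simp add: stackelberg_def)
  then show ?thesis
    using assms(6) premium by blast
qed

end
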